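(* For $\nu,\lambda\in\mathbb C$ and integers $0\le k\le n$, \[ d^k_n(\nu)=\sum_{j=0}^{n-k}\binom{n-k}{j}\,d^k_{n-j}(\lambda)\,(\nu-\lambda)^j. \]
   Context: For $\lambda\in\mathbb C$ and integers $0\le k\le n$, define $e^k_n(\lambda)$ by $e^n_n(\lambda)=n!$ and, for $1\le k\le n$, $e^{k-1}_n(\lambda)=e^k_n(\lambda)+(\lambda-1)e^{k-1}_{n-1}(\lambda)$. Put $d^k_n(\lambda)=e^k_n(\lambda)/k!$. *)

theory Defs
  imports Complex_Main
begin

text \<open>e_coef lam k n = e^k_n(lam), meaningful for k \<le> n.
  e^n_n = n!; for k < n: e^k_n = e^(k+1)_n + (lam - 1) e^k_(n-1)
  (this is the defining recursion with k-1 replaced by k).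
  Values for k > n are irrelevant junk (set to n!).\<close>
function e_coef :: "complex \<Rightarrow> nat \<Rightarrow> nat \<Rightarrow> complex" where
  "e_coef lam k n =
     (if n \<le> k then of_nat (fact n)
      else e_coef lam (Suc k) n + (lam - 1) * e_coef lam k (n - 1))"
  by auto
termination by (relation "measure (\<lambda>(lam, k, n). n - k)") auto

declare e_coef.simps [simp del]

definition d_coef :: "complex \<Rightarrow> nat \<Rightarrow> nat \<Rightarrow> complex" where
  "d_coef lam k n = e_coef lam k n / of_nat (fact k)"

end

theory Submission
  imports Defs
begin

text \<open>Write \<open>x = \<nu> - \<lambda>\<close>. Since \<open>\<nu> - 1 = (\<lambda> - 1) + x\<close>, the recursion for \<open>e\<^sup>k\<^sub>n(\<nu>)\<close> is
  the recursion for \<open>e\<^sup>k\<^sub>n(\<lambda>)\<close> plus an extra term \<open>x e\<^sup>k\<^sub>n\<^sub>-\<^sub>1\<close>. Inducting on \<open>n - k\<close>,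
  this extra term is exactly what Pascal's rule adds when the binomial sum of order
  \<open>n - k - 1\<close> is raised to order \<open>n - k\<close>.\<close>

lemma e_coef_diag: "e_coef lam k k = of_nat (fact k)"
  by (subst e_coef.simps) simp

lemma e_coef_step:
  "k < n \<Longrightarrow> e_coef lam k n = e_coef lam (Suc k) n + (lam - 1) * e_coef lam k (n - 1)"
  by (subst e_coef.simps) simp

lemma sum_choose_Suc_pascal:
  fixes f :: "nat \<Rightarrow> 'a::comm_semiring_1"
  shows "(\<Sum>j\<le>Suc m. of_nat (Suc m choose j) * f j) =
    (\<Sum>j\<le>m. of_nat (m choose j) * f j) + (\<Sum>j\<le>m. of_nat (m choose j) * f (Suc j))"
proof -
  have first_terms: "f 0 + (\<Sum>j<m. of_nat (m choose Suc j) * f (Suc j)) = (\<Sum>j\<le>m. of_nat (m choose j) * f j)"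
    by (simp add: sum.atMost_shift lessThan_Suc_atMost)
  have "(\<Sum>j\<le>Suc m. of_nat (Suc m choose j) * f j) =
      f 0 + (\<Sum>j\<le>m. of_nat (m choose Suc j) * f (Suc j)) + (\<Sum>j\<le>m. of_nat (m choose j) * f (Suc j))"
    by (subst sum.atMost_Suc_shift) (simp add: sum.distrib distrib_right add_ac)
  also have "(\<Sum>j\<le>m. of_nat (m choose Suc j) * f (Suc j)) = (\<Sum>j<m. of_nat (m choose Suc j) * f (Suc j))"
    by (simp add: lessThan_Suc_atMost[symmetric] binomial_eq_0)
  finally show ?thesis
    using first_terms by simp
qed

definition binomial_shift :: "'a::comm_semiring_1 \<Rightarrow> nat \<Rightarrow> (nat \<Rightarrow> 'a) \<Rightarrow> nat \<Rightarrow> 'a" where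
  "binomial_shift x m g n = (\<Sum>j\<le>m. of_nat (m choose j) * g (n - j) * x ^ j)"

lemma binomial_shift_0 [simp]: "binomial_shift x 0 g n = g n"
  by (simp add: binomial_shift_def)

lemma binomial_shift_Suc:
  "binomial_shift x (Suc m) g n = binomial_shift x m g n + x * binomial_shift x m g (n - 1)"
proof -
  have "x * binomial_shift x m g (n - 1) = (\<Sum>j\<le>m. of_nat (m choose j) * (g (n - Suc j) * x ^ Suc j))"
    unfolding binomial_shift_def sum_distrib_left
    by (intro sum.cong) (simp_all add: mult_ac)
  then show ?thesis
    using sum_choose_Suc_pascal[of m "\<lambda>j. g (n - j) * x ^ j"]
    by (simp add: binomial_shift_def mult.assoc)
qed

lemma binomial_shift_cong:
  "(\<And>j. j \<le> m \<Longrightarrow> g (n - j) = h (n - j)) \<Longrightarrow> binomial_shift x m g n = binomial_shift x m h n"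
  unfolding binomial_shift_def by (intro sum.cong) auto

lemma binomial_shift_add:
  "binomial_shift x m (\<lambda>i. g i + c * h i) n = binomial_shift x m g n + c * binomial_shift x m h n"
  by (simp add: binomial_shift_def sum.distrib sum_distrib_left algebra_simps)

lemma binomial_shift_e_coef_step:
  assumes "n = k + Suc m"
  shows "binomial_shift x m (e_coef lam k) n =
    binomial_shift x m (e_coef lam (Suc k)) n + (lam - 1) * binomial_shift x m (e_coef lam k) (n - 1)"
proof -
  have "binomial_shift x m (e_coef lam k) n =
      binomial_shift x m (\<lambda>i. e_coef lam (Suc k) i + (lam - 1) * e_coef lam k (i - 1)) n"
    using assms by (intro binomial_shift_cong) (simp add: e_coef_step)
  also have "\<dots> = binomial_shift x m (e_coef lam (Suc k)) n
      + (lam - 1) * binomial_shift x m (\<lambda>i. e_coef lam k (i - 1)) n"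
    by (rule binomial_shift_add)
  also have "binomial_shift x m (\<lambda>i. e_coef lam k (i - 1)) n = binomial_shift x m (e_coef lam k) (n - 1)"
    by (simp add: binomial_shift_def diff_commute)
  finally show ?thesis .
qed

lemma e_coef_change_parameter:
  "n = k + m \<Longrightarrow> e_coef nu k n = binomial_shift (nu - lam) m (e_coef lam k) n"
proof (induction m arbitrary: k n)
  case 0
  then show ?case by (simp add: e_coef_diag)
next
  case (Suc m)
  let ?S = "\<lambda>k n. binomial_shift (nu - lam) m (e_coef lam k) n"
  have "e_coef nu k n = e_coef nu (Suc k) n + ((lam - 1) + (nu - lam)) * e_coef nu k (n - 1)"
    using Suc.prems by (simp add: e_coef_step)
  also have "\<dots> = ?S (Suc k) n + ((lam - 1) + (nu - lam)) * ?S k (n - 1)"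
    using Suc.prems by (simp add: Suc.IH)
  also have "\<dots> = ?S k n + (nu - lam) * ?S k (n - 1)"
    using binomial_shift_e_coef_step[OF Suc.prems] by (simp add: algebra_simps)
  finally show ?case
    by (simp add: binomial_shift_Suc)
qed

theorem mainTheorem7:
  fixes nu lam :: complex and k n :: nat
  assumes "k \<le> n"
  shows "d_coef nu k n =
    (\<Sum>j=0..n-k. of_nat (n - k choose j) * d_coef lam k (n - j) * (nu - lam) ^ j)"
proof -
  have "e_coef nu k n = binomial_shift (nu - lam) (n - k) (e_coef lam k) n"
    using assms by (intro e_coef_change_parameter) simp
  then show ?thesis
    by (simp add: d_coef_def binomial_shift_def atLeast0AtMost sum_divide_distrib)
qed

end
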